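(* Let $\mathbb{F}$ be a field of characteristic $2$ with at least $4$ elements, let $k\geq 1$ be an integer, and let $B\in M_{4k+2}(\mathbb{F})$ be a non-derogative matrix with characteristic polynomial $p_B(x)=x^{4k+2}+w_{4k+1}x^{4k+1}+w_{4k}x^{4k}+\dots+w_0$. Let $a\in\mathbb{F}$ with $a\neq 0,1$. (a) If $\operatorname{Trace}(B)=c\neq 0$, then there exist $N,D\in M_{4k+2}(\mathbb{F})$ with $B=N+D$, $N^2=0$, and $D$ diagonalizable with every eigenvalue in $\{0,\ c,\ ca,\ c(a+1)\}$. (b) If $\operatorname{Trace}(B)=0$ and $b\in\mathbb{F}$ satisfies $b^2=w_{4k}+a^2+a+1$ (such $b$ always exists when $\mathbb{F}$ is finite), then there exist $N,D\in M_{4k+2}(\mathbb{F})$ with $B=N+D$, $N^2=0$, and $D$ diagonalizable with every eigenvalue in $\{b,\ b+1,\ b+a,\ b+a+1\}$.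
   Context: A square matrix is non-derogative if its minimal polynomial equals its characteristic polynomial. A matrix $D\in M_n(\mathbb{F})$ is diagonalizable if there exists an invertible $U\in M_n(\mathbb{F})$ such that $U^{-1}DU$ is diagonal. *)

theory Defs
  imports "Jordan_Normal_Form.Char_Poly" "HOL-Computational_Algebra.Polynomial"
begin

definition mat_trace :: "'a :: comm_ring_1 mat \<Rightarrow> 'a" where
  "mat_trace A = (\<Sum>i<dim_row A. A $$ (i, i))"

definition poly_mat :: "'a :: comm_ring_1 poly \<Rightarrow> 'a mat \<Rightarrow> 'a mat" where
  "poly_mat p A = mat (dim_row A) (dim_row A)
     (\<lambda>(i, j). \<Sum>k\<le>degree p. coeff p k * (A ^\<^sub>m k) $$ (i, j))"

definition is_minimal_poly :: "'a :: field mat \<Rightarrow> 'a poly \<Rightarrow> bool" where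
  "is_minimal_poly A p \<longleftrightarrow>
     monic p \<and> poly_mat p A = 0\<^sub>m (dim_row A) (dim_row A) \<and>
     (\<forall>q. q \<noteq> 0 \<and> poly_mat q A = 0\<^sub>m (dim_row A) (dim_row A) \<longrightarrow> degree p \<le> degree q)"

definition non_derogative :: "'a :: field mat \<Rightarrow> bool" where
  "non_derogative A \<longleftrightarrow> is_minimal_poly A (char_poly A)"

definition diagonalizable :: "'a :: field mat \<Rightarrow> bool" where
  "diagonalizable D \<longleftrightarrow> (\<exists>Delta. diagonal_mat Delta \<and> similar_mat D Delta)"

end

theory Submission
  imports Defs
begin

text \<open>Since \<open>B\<close> is non-derogative it has a cyclic vector \<open>v\<close>; it is built from vectors whose
  annihilators are the prime-power parts of the minimal polynomial.
  Write \<open>n = 2m\<close> and let \<open>\<theta>\<^sub>i\<close> run through \<open>\<rho>, \<lambda>\<^sub>0, \<rho>, \<lambda>\<^sub>1, \<dots>, \<rho>, \<lambda>\<^sub>m\<^sub>-\<^sub>2, \<rho>\<close>.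
  The vectors \<open>z\<^sub>i = f\<^sub>i(B) v\<close> with \<open>f\<^sub>0 = 1\<close> and \<open>f\<^sub>i\<^sub>+\<^sub>1 = (x - \<theta>\<^sub>i) f\<^sub>i\<close> form a basis with
  \<open>B z\<^sub>i = z\<^sub>i\<^sub>+\<^sub>1 + \<theta>\<^sub>i z\<^sub>i\<close> for \<open>i < n - 1\<close>. In this basis \<open>B = N + D\<close>, where \<open>N\<close> consists of
  the subdiagonal ones in the even columns, so \<open>N\<^sup>2 = 0\<close>, and \<open>D\<close> keeps the remaining
  subdiagonal ones, the diagonal \<open>\<theta>\<close> and the last column of \<open>B\<close>. Comparing traces, the last
  diagonal entry of \<open>D\<close> is \<open>s = tr B - m \<rho> - \<Sum> \<lambda>\<^sub>j\<close>; if \<open>s\<close> differs from \<open>\<rho>\<close> and the \<open>\<lambda>\<^sub>j\<close> and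
  these differ from \<open>\<rho>\<close>, then \<open>D\<close> has a basis of eigenvectors. In characteristic 2 with
  \<open>n = 4k + 2\<close> the choices \<open>\<rho> = 0, \<lambda>\<^sub>j = c a, s = c\<close> and
  \<open>\<rho> = b, \<lambda>\<^sub>0 = b + a + 1, \<lambda>\<^sub>j = b + a, s = b + 1\<close> satisfy these conditions.\<close>

section \<open>Polynomials evaluated at matrices\<close>

lemma pow_mat_Suc_left:
  assumes "A \<in> carrier_mat n n"
  shows "A ^\<^sub>m Suc k = A * A ^\<^sub>m k"
proof (induction k)
  case (Suc k)
  have "A ^\<^sub>m Suc (Suc k) = (A * A ^\<^sub>m k) * A" using Suc by simp
  also have "\<dots> = A * (A ^\<^sub>m k * A)"
    using assms by (intro assoc_mult_mat[of _ n n _ n _ n]) auto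
  finally show ?case by simp
qed (use assms in simp)

lemma poly_mat_dim [simp]: "dim_row (poly_mat f A) = dim_row A" "dim_col (poly_mat f A) = dim_row A"
  unfolding poly_mat_def by auto

lemma poly_mat_carrier [simp]: "A \<in> carrier_mat n n \<Longrightarrow> poly_mat f A \<in> carrier_mat n n"
  unfolding poly_mat_def by auto

lemma poly_mat_index:
  assumes A: "A \<in> carrier_mat n n" and "i < n" "j < n" and "degree f \<le> d"
  shows "poly_mat f A $$ (i, j) = (\<Sum>k\<le>d. coeff f k * (A ^\<^sub>m k) $$ (i, j))"
proof -
  have "poly_mat f A $$ (i, j) = (\<Sum>k\<le>degree f. coeff f k * (A ^\<^sub>m k) $$ (i, j))"
    using assms unfolding poly_mat_def by auto
  also have "\<dots> = (\<Sum>k\<le>d. coeff f k * (A ^\<^sub>m k) $$ (i, j))"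
    by (rule sum.mono_neutral_left) (use assms in \<open>auto simp: coeff_eq_0\<close>)
  finally show ?thesis .
qed

lemma poly_mat_0: "A \<in> carrier_mat n n \<Longrightarrow> poly_mat 0 A = 0\<^sub>m n n"
  unfolding poly_mat_def by (intro eq_matI) auto

lemma poly_mat_add:
  assumes A: "A \<in> carrier_mat n n"
  shows "poly_mat (f + g) A = poly_mat f A + poly_mat g A"
proof (rule eq_matI)
  fix i j assume "i < dim_row (poly_mat f A + poly_mat g A)" "j < dim_col (poly_mat f A + poly_mat g A)"
  then have ij: "i < n" "j < n" using A by auto
  let ?d = "max (degree f) (degree g)"
  have "degree (f + g) \<le> ?d" by (rule degree_add_le) auto
  then show "poly_mat (f + g) A $$ (i, j) = (poly_mat f A + poly_mat g A) $$ (i, j)"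
    using A ij by (simp add: poly_mat_index[OF A ij, of _ ?d] sum.distrib algebra_simps)
qed (use A in auto)

lemma poly_mat_smult:
  assumes A: "A \<in> carrier_mat n n"
  shows "poly_mat (Polynomial.smult c f) A = c \<cdot>\<^sub>m poly_mat f A"
proof (rule eq_matI)
  fix i j assume "i < dim_row (c \<cdot>\<^sub>m poly_mat f A)" "j < dim_col (c \<cdot>\<^sub>m poly_mat f A)"
  then have ij: "i < n" "j < n" using A by auto
  have "poly_mat (Polynomial.smult c f) A $$ (i, j)
      = (\<Sum>k\<le>degree f. coeff (Polynomial.smult c f) k * (A ^\<^sub>m k) $$ (i, j))"
    by (rule poly_mat_index[OF A ij degree_smult_le])
  then show "poly_mat (Polynomial.smult c f) A $$ (i, j) = (c \<cdot>\<^sub>m poly_mat f A) $$ (i, j)"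
    using A ij by (simp add: poly_mat_index[OF A ij order.refl] sum_distrib_left algebra_simps)
qed (use A in auto)

lemma poly_mat_pCons:
  assumes A: "A \<in> carrier_mat n n"
  shows "poly_mat (pCons c f) A = c \<cdot>\<^sub>m 1\<^sub>m n + A * poly_mat f A"
proof (rule eq_matI)
  fix i j assume "i < dim_row (c \<cdot>\<^sub>m 1\<^sub>m n + A * poly_mat f A)"
    "j < dim_col (c \<cdot>\<^sub>m 1\<^sub>m n + A * poly_mat f A)"
  then have i: "i < n" and j: "j < n" using A by auto
  let ?d = "degree f"
  have "poly_mat (pCons c f) A $$ (i, j) = (\<Sum>k\<le>Suc ?d. coeff (pCons c f) k * (A ^\<^sub>m k) $$ (i, j))"
    by (rule poly_mat_index[OF A i j]) (simp add: degree_pCons_le)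
  also have "\<dots> = c * 1\<^sub>m n $$ (i, j) + (\<Sum>k\<le>?d. coeff f k * (A ^\<^sub>m Suc k) $$ (i, j))"
    using A by (subst sum.atMost_Suc_shift) simp
  also have "(\<Sum>k\<le>?d. coeff f k * (A ^\<^sub>m Suc k) $$ (i, j))
      = (\<Sum>k\<le>?d. coeff f k * (A * A ^\<^sub>m k) $$ (i, j))"
    by (simp only: pow_mat_Suc_left[OF A])
  also have "(\<Sum>k\<le>?d. coeff f k * (A * A ^\<^sub>m k) $$ (i, j))
      = (\<Sum>l<n. A $$ (i, l) * (\<Sum>k\<le>?d. coeff f k * (A ^\<^sub>m k) $$ (l, j)))"
    using A i j by (simp add: scalar_prod_def atLeast0LessThan sum_distrib_left algebra_simps)
      (rule sum.swap)
  also have "\<dots> = (A * poly_mat f A) $$ (i, j)"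
    using A i j poly_mat_index[OF A _ j order.refl, of _ f]
    by (simp add: scalar_prod_def atLeast0LessThan)
  finally show "poly_mat (pCons c f) A $$ (i, j) = (c \<cdot>\<^sub>m 1\<^sub>m n + A * poly_mat f A) $$ (i, j)"
    using A i j by simp
qed (use A in auto)

lemma poly_mat_pCons_0:
  assumes "A \<in> carrier_mat n n"
  shows "poly_mat (pCons 0 f) A = A * poly_mat f A"
  using assms by (simp add: poly_mat_pCons) (rule eq_matI; simp)

lemma poly_mat_mult:
  assumes A: "A \<in> carrier_mat n n"
  shows "poly_mat (f * g) A = poly_mat f A * poly_mat g A"
proof (induction f)
  case 0
  then show ?case using A by (simp add: poly_mat_0 left_mult_zero_mat[of _ n n])
next
  case (pCons c f)
  have F: "poly_mat f A \<in> carrier_mat n n" and G: "poly_mat g A \<in> carrier_mat n n"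
    using A by auto
  have "poly_mat (pCons c f * g) A = poly_mat (Polynomial.smult c g + pCons 0 (f * g)) A"
    by simp
  also have "\<dots> = c \<cdot>\<^sub>m poly_mat g A + A * (poly_mat f A * poly_mat g A)"
    using A pCons.IH by (simp add: poly_mat_add poly_mat_smult poly_mat_pCons_0)
  also have "\<dots> = (c \<cdot>\<^sub>m 1\<^sub>m n) * poly_mat g A + (A * poly_mat f A) * poly_mat g A"
  proof -
    have "(c \<cdot>\<^sub>m 1\<^sub>m n) * poly_mat g A = c \<cdot>\<^sub>m poly_mat g A"
      using G by (simp add: mult_smult_assoc_mat[of _ n n _ n] left_mult_one_mat[of _ n n])
    then show ?thesis
      using A F G by (simp add: assoc_mult_mat[of _ n n _ n _ n])
  qed
  also have "\<dots> = (c \<cdot>\<^sub>m 1\<^sub>m n + A * poly_mat f A) * poly_mat g A"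
    using A F G by (intro add_mult_distrib_mat[symmetric, of _ n n]) auto
  also have "\<dots> = poly_mat (pCons c f) A * poly_mat g A"
    using A by (simp add: poly_mat_pCons)
  finally show ?case .
qed

lemma poly_mat_one: "A \<in> carrier_mat n n \<Longrightarrow> poly_mat 1 A = 1\<^sub>m n"
  by (simp add: one_pCons poly_mat_pCons poly_mat_0) (rule eq_matI; simp)

lemma poly_mat_x: "A \<in> carrier_mat n n \<Longrightarrow> poly_mat [:0, 1:] A = A"
  by (simp add: poly_mat_pCons poly_mat_one flip: one_pCons) (rule eq_matI; simp)

lemma mult_mat_vec_zero [simp]: "A *\<^sub>v 0\<^sub>v (dim_col A) = 0\<^sub>v (dim_row A)"
  by (intro eq_vecI) (auto simp: scalar_prod_def)

lemma zero_mat_mult_vec [simp]: "v \<in> carrier_vec m \<Longrightarrow> 0\<^sub>m n m *\<^sub>v v = 0\<^sub>v n"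
  by (intro eq_vecI) (auto simp: scalar_prod_def)

lemma mat_mult_vec_nonzero:
  fixes M :: "'a :: comm_ring_1 mat"
  assumes M: "M \<in> carrier_mat n n" and "M \<noteq> 0\<^sub>m n n"
  obtains z where "z \<in> carrier_vec n" "M *\<^sub>v z \<noteq> 0\<^sub>v n"
proof -
  have "\<not> (\<forall>i<n. \<forall>j<n. M $$ (i, j) = 0)"
  proof
    assume "\<forall>i<n. \<forall>j<n. M $$ (i, j) = 0"
    then have "M = 0\<^sub>m n n" using M by (intro eq_matI) auto
    then show False using assms(2) by simp
  qed
  then obtain i j where ij: "i < n" "j < n" "M $$ (i, j) \<noteq> 0" by blast
  then have "(M *\<^sub>v unit_vec n j) $ i \<noteq> 0"
    using M by simp
  then have "M *\<^sub>v unit_vec n j \<noteq> 0\<^sub>v n" using ij(1) by (metis index_zero_vec(1))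
  then show ?thesis using that[of "unit_vec n j"] by simp
qed

lemma poly_mat_mult_vec_carrier [simp]:
  "A \<in> carrier_mat n n \<Longrightarrow> u \<in> carrier_vec n \<Longrightarrow> poly_mat f A *\<^sub>v u \<in> carrier_vec n"
  by (metis mult_mat_vec_carrier poly_mat_carrier)

lemma poly_mat_mult_vec:
  assumes "A \<in> carrier_mat n n" "u \<in> carrier_vec n"
  shows "poly_mat (f * g) A *\<^sub>v u = poly_mat f A *\<^sub>v (poly_mat g A *\<^sub>v u)"
  using assms by (simp add: poly_mat_mult assoc_mult_mat_vec[of _ n n _ n])

lemma poly_mat_mult_vec_commute:
  assumes "A \<in> carrier_mat n n" "u \<in> carrier_vec n"
  shows "poly_mat f A *\<^sub>v (poly_mat g A *\<^sub>v u) = poly_mat g A *\<^sub>v (poly_mat f A *\<^sub>v u)"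
  using assms by (metis poly_mat_mult_vec mult.commute)

lemma poly_mat_add_vec:
  assumes "A \<in> carrier_mat n n" "u \<in> carrier_vec n"
  shows "poly_mat (f + g) A *\<^sub>v u = poly_mat f A *\<^sub>v u + poly_mat g A *\<^sub>v u"
  using assms by (simp add: poly_mat_add add_mult_distrib_mat_vec[of _ n n])

lemma poly_mat_mult_vec_dvd_zero:
  assumes A: "A \<in> carrier_mat n n" and u: "u \<in> carrier_vec n"
    and f: "poly_mat f A *\<^sub>v u = 0\<^sub>v n" and "f dvd h"
  shows "poly_mat h A *\<^sub>v u = 0\<^sub>v n"
proof -
  obtain r where "h = r * f" using \<open>f dvd h\<close> by (metis dvdE mult.commute)
  then show ?thesis
    using A f mult_mat_vec_zero[of "poly_mat r A"] by (simp add: poly_mat_mult_vec[OF A u])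
qed

section \<open>Coprime polynomials over a field\<close>

text \<open>Polynomial gcds in the library need a gcd structure on the coefficients, so over an
  arbitrary field Bezout's identity is derived here from a combination of least degree.\<close>

lemma field_poly_bezout:
  fixes f g :: "'a :: field poly"
  assumes "coprime f g"
  obtains s t where "s * f + t * g = 1"
proof (cases "f = 0")
  case True
  then have "is_unit g" using assms by simp
  then obtain t where "1 = g * t" by (rule dvdE)
  then show ?thesis using that[of 0 t] by (simp add: mult.commute)
next
  case False
  define comb where "comb d \<longleftrightarrow> d \<noteq> 0 \<and> (\<exists>s t. d = s * f + t * g)" for d
  have "comb f" using False unfolding comb_def by (metis add_0_right mult_1 mult_zero_left)
  then obtain d where "comb d" and least: "\<And>d'. comb d' \<Longrightarrow> degree d \<le> degree d'"
    using ex_has_least_nat[of comb f degree] by blast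
  then obtain s t where st: "d = s * f + t * g" and "d \<noteq> 0" unfolding comb_def by blast
  have d_dvd: "d dvd a * f + b * g" for a b
  proof (rule ccontr)
    let ?x = "a * f + b * g"
    assume "\<not> d dvd ?x"
    then have "?x mod d \<noteq> 0" by (simp add: mod_eq_0_iff_dvd)
    moreover have "?x mod d = (a - ?x div d * s) * f + (b - ?x div d * t) * g"
      by (simp add: st minus_div_mult_eq_mod[symmetric] algebra_simps)
    ultimately have "degree d \<le> degree (?x mod d)" by (intro least) (auto simp: comb_def)
    moreover have "degree (?x mod d) < degree d"
      using \<open>?x mod d \<noteq> 0\<close> \<open>d \<noteq> 0\<close> degree_mod_less by blast
    ultimately show False by simp
  qed
  have "d dvd f" "d dvd g" using d_dvd[of 1 0] d_dvd[of 0 1] by simp_all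
  then have "is_unit d" by (rule coprime_common_divisor[OF assms])
  then obtain e where "1 = d * e" by (rule dvdE)
  then show ?thesis using that[of "e * s" "e * t"] st by (simp add: algebra_simps)
qed

lemma field_poly_coprime_dvd_mult:
  fixes a b c :: "'a :: field poly"
  assumes "coprime a b" and "a dvd b * c"
  shows "a dvd c"
proof -
  obtain s t where "s * a + t * b = 1" using field_poly_bezout[OF assms(1)] .
  then have "c = c * (s * a + t * b)" by simp
  also have "\<dots> = (s * c) * a + t * (b * c)" by (simp add: algebra_simps)
  finally have c: "c = (s * c) * a + t * (b * c)" .
  have "a dvd (s * c) * a + t * (b * c)"
    by (rule dvd_add) (simp_all add: assms(2))
  then show ?thesis by (simp only: c[symmetric])
qed

lemma field_poly_divides_mult:
  fixes a b c :: "'a :: field poly"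
  assumes "coprime a b" and "a dvd c" and "b dvd c"
  shows "a * b dvd c"
proof -
  obtain c' where c: "c = a * c'" using assms(2) by blast
  then have "b dvd c'"
    using assms(1,3) field_poly_coprime_dvd_mult[of b a c'] by (simp add: coprime_commute)
  then show ?thesis using c by simp
qed

lemma field_poly_coprime_mult_left:
  fixes a b c :: "'a :: field poly"
  assumes "coprime a c" and "coprime b c"
  shows "coprime (a * b) c"
proof (rule coprimeI)
  fix d assume "d dvd a * b" and dc: "d dvd c"
  have "coprime d b"
  proof (rule coprimeI)
    fix e assume "e dvd d" "e dvd b"
    then show "is_unit e" using assms(2) dc by (meson coprime_common_divisor dvd_trans)
  qed
  then have "d dvd a" using \<open>d dvd a * b\<close> field_poly_coprime_dvd_mult[of d b a]
    by (simp add: mult.commute)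
  then show "is_unit d" using assms(1) dc by (meson coprime_common_divisor)
qed

lemma field_poly_coprime_power_left:
  fixes a c :: "'a :: field poly"
  shows "coprime a c \<Longrightarrow> coprime (a ^ k) c"
  by (induction k) (simp_all add: field_poly_coprime_mult_left)

lemma irreducible_imp_coprime:
  assumes "irreducible p" and "\<not> p dvd h"
  shows "coprime p h"
proof (rule coprimeI)
  fix d assume "d dvd p" "d dvd h"
  then obtain q where pq: "p = d * q" by blast
  from irreducibleD[OF \<open>irreducible p\<close> pq] show "is_unit d"
  proof
    assume "is_unit q"
    then obtain r where "1 = q * r" by (rule dvdE)
    then have "d = p * r" using pq by (simp add: mult.assoc)
    then have "p dvd h" using \<open>d dvd h\<close> by (auto intro: dvd_trans)
    with \<open>\<not> p dvd h\<close> show ?thesis ..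
  qed
qed

lemma irreducible_factor_exists:
  fixes r :: "'a :: field poly"
  assumes "r \<noteq> 0" and "\<not> is_unit r"
  shows "\<exists>p. irreducible p \<and> p dvd r"
  using assms
proof (induction "degree r" arbitrary: r rule: less_induct)
  case less
  show ?case
  proof (cases "irreducible r")
    case False
    then obtain a b where ab: "r = a * b" "\<not> is_unit a" "\<not> is_unit b"
      using less.prems by (auto simp: irreducible_def)
    then have "a \<noteq> 0" "b \<noteq> 0" using less.prems by auto
    with ab have "degree a < degree r" by (simp add: degree_mult_eq is_unit_iff_degree)
    then obtain p where "irreducible p" "p dvd a" using less.hyps \<open>a \<noteq> 0\<close> ab(2) by blast
    then show ?thesis using ab(1) by auto
  qed auto
qed

lemma irreducible_power_decompose:
  fixes p h :: "'a :: field poly"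
  assumes p: "irreducible p" and "h \<noteq> 0"
  shows "\<exists>j h0. h = p ^ j * h0 \<and> \<not> p dvd h0"
  using assms(2)
proof (induction "degree h" arbitrary: h rule: less_induct)
  case less
  show ?case
  proof (cases "p dvd h")
    case True
    then obtain h' where h': "h = p * h'" by blast
    have "p \<noteq> 0" "\<not> is_unit p" using p by auto
    moreover have "h' \<noteq> 0" using h' less.prems by auto
    ultimately have "degree h' < degree h" using h' by (simp add: degree_mult_eq is_unit_iff_degree)
    then obtain j h0 where "h' = p ^ j * h0" "\<not> p dvd h0" using less.hyps \<open>h' \<noteq> 0\<close> by blast
    then show ?thesis using h' by (intro exI[of _ "Suc j"] exI[of _ h0]) (simp add: mult.assoc)
  qed (use in \<open>intro exI[of _ 0] exI[of _ h]; simp\<close>)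
qed

section \<open>Cyclic vectors of non-derogative matrices\<close>

definition generates_annihilator :: "'a :: field mat \<Rightarrow> 'a vec \<Rightarrow> 'a poly \<Rightarrow> bool" where
  "generates_annihilator A u p \<longleftrightarrow> (\<forall>h. poly_mat h A *\<^sub>v u = 0\<^sub>v (dim_row A) \<longleftrightarrow> p dvd h)"

lemma poly_mat_coprime_kernels_trivial:
  fixes A :: "'a :: field mat"
  assumes A: "A \<in> carrier_mat n n" and u: "u \<in> carrier_vec n" and "coprime f g"
    and f: "poly_mat f A *\<^sub>v u = 0\<^sub>v n" and g: "poly_mat g A *\<^sub>v u = 0\<^sub>v n"
  shows "u = 0\<^sub>v n"
proof -
  obtain s t where st: "s * f + t * g = 1" using field_poly_bezout[OF \<open>coprime f g\<close>] .
  have "u = poly_mat (s * f + t * g) A *\<^sub>v u" using A u by (simp add: st poly_mat_one)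
  also have "\<dots> = 0\<^sub>v n"
    using A u f g mult_mat_vec_zero[of "poly_mat s A"] mult_mat_vec_zero[of "poly_mat t A"]
    by (simp add: poly_mat_add_vec poly_mat_mult_vec)
  finally show ?thesis .
qed

lemma generates_annihilator_mult:
  assumes A: "A \<in> carrier_mat n n" and u: "u \<in> carrier_vec n" and w: "w \<in> carrier_vec n"
    and pq: "coprime p q"
    and gu: "generates_annihilator A u p" and gw: "generates_annihilator A w q"
  shows "generates_annihilator A (u + w) (p * q)"
proof -
  have dvd: "p' dvd h"
    if "poly_mat h A *\<^sub>v (u' + w') = 0\<^sub>v n" "coprime p' q'"
      "generates_annihilator A u' p'" "generates_annihilator A w' q'"
      "u' \<in> carrier_vec n" "w' \<in> carrier_vec n" for h u' w' p' q'
  proof -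
    have "poly_mat (q' * h) A *\<^sub>v w' = 0\<^sub>v n"
      using that(4) A unfolding generates_annihilator_def by simp
    moreover have "poly_mat (q' * h) A *\<^sub>v (u' + w') = 0\<^sub>v n"
      using that(1,5,6) A mult_mat_vec_zero[of "poly_mat q' A"] by (simp add: poly_mat_mult_vec)
    moreover have "poly_mat (q' * h) A *\<^sub>v u' \<in> carrier_vec n" using that(5) A by simp
    ultimately have "poly_mat (q' * h) A *\<^sub>v u' = 0\<^sub>v n"
      using that(5,6) A by (simp add: mult_add_distrib_mat_vec[of _ n n])
    then have "p' dvd q' * h" using that(3) A unfolding generates_annihilator_def by simp
    with that(2) show ?thesis by (rule field_poly_coprime_dvd_mult)
  qed
  show ?thesis
    unfolding generates_annihilator_def
  proof (intro allI iffI)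
    fix h assume h: "poly_mat h A *\<^sub>v (u + w) = 0\<^sub>v (dim_row A)"
    have "p dvd h" using dvd[OF _ pq gu gw u w] h A by simp
    moreover have "q dvd h"
      using dvd[OF _ _ gw gu w u] h A pq by (simp add: comm_add_vec[OF u w] coprime_commute)
    ultimately show "p * q dvd h" using pq by (rule field_poly_divides_mult[rotated 1])
  next
    fix h assume "p * q dvd h"
    then have "poly_mat h A *\<^sub>v u = 0\<^sub>v n" "poly_mat h A *\<^sub>v w = 0\<^sub>v n"
      using gu gw A unfolding generates_annihilator_def by (auto intro: dvd_mult_left dvd_mult_right)
    then show "poly_mat h A *\<^sub>v (u + w) = 0\<^sub>v (dim_row A)"
      using A u w by (simp add: mult_add_distrib_mat_vec[of _ n n])
  qed
qed

lemma generates_annihilator_zero_vec: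
  assumes "is_unit r"
  shows "generates_annihilator A (0\<^sub>v (dim_row A)) r"
  unfolding generates_annihilator_def
  using mult_mat_vec_zero[of "poly_mat _ A"] unit_imp_dvd[OF assms] by simp

lemma annihilated_by_lower_prime_power:
  fixes A :: "'a :: field mat"
  assumes A: "A \<in> carrier_mat n n" and u: "u \<in> carrier_vec n" and p: "irreducible p"
    and pe: "poly_mat (p ^ e) A *\<^sub>v u = 0\<^sub>v n" and h: "poly_mat h A *\<^sub>v u = 0\<^sub>v n"
    and "\<not> p ^ e dvd h"
  shows "poly_mat (p ^ (e - 1)) A *\<^sub>v u = 0\<^sub>v n"
proof -
  have "h \<noteq> 0" using \<open>\<not> p ^ e dvd h\<close> by auto
  then obtain j h0 where h0: "h = p ^ j * h0" "\<not> p dvd h0"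
    using irreducible_power_decompose[OF p] by blast
  have "j < e"
  proof (rule ccontr)
    assume "\<not> j < e"
    then have "p ^ e dvd p ^ j" by (simp add: le_imp_power_dvd)
    then show False using \<open>\<not> p ^ e dvd h\<close> h0(1) by (meson dvd_mult2)
  qed
  define y where "y = poly_mat (p ^ j) A *\<^sub>v u"
  have y: "y \<in> carrier_vec n" using A u by (simp add: y_def)
  have "poly_mat h0 A *\<^sub>v y = 0\<^sub>v n"
    unfolding y_def using A u h h0(1) by (simp add: poly_mat_mult_vec[symmetric] mult.commute)
  moreover have "poly_mat (p ^ e) A *\<^sub>v y = 0\<^sub>v n"
    unfolding y_def using A u pe mult_mat_vec_zero[of "poly_mat (p ^ j) A"]
    by (simp add: poly_mat_mult_vec_commute[of A n u "p ^ e"])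
  moreover have "coprime h0 (p ^ e)"
    using field_poly_coprime_power_left[OF irreducible_imp_coprime[OF p h0(2)]]
    by (simp add: coprime_commute)
  ultimately have "y = 0\<^sub>v n" using poly_mat_coprime_kernels_trivial[OF A y] by blast
  then have "poly_mat (p ^ (e - 1 - j) * p ^ j) A *\<^sub>v u = 0\<^sub>v n"
    using A u mult_mat_vec_zero[of "poly_mat (p ^ (e - 1 - j)) A"]
    by (simp add: poly_mat_mult_vec y_def)
  then show ?thesis using \<open>j < e\<close> by (simp add: power_add[symmetric])
qed

lemma generates_annihilator_prime_power:
  fixes A :: "'a :: field mat"
  assumes A: "A \<in> carrier_mat n n" and min: "is_minimal_poly A \<mu>"
    and p: "irreducible p" and "e > 0" and "p ^ e dvd \<mu>"
  shows "\<exists>u\<in>carrier_vec n. generates_annihilator A u (p ^ e)"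
proof -
  obtain t where \<mu>: "\<mu> = p ^ e * t" using \<open>p ^ e dvd \<mu>\<close> by blast
  have "p \<noteq> 0" "degree p > 0" using p by (auto simp: is_unit_iff_degree)
  have \<mu>_0: "poly_mat \<mu> A = 0\<^sub>m n n" and "\<mu> \<noteq> 0"
    and \<mu>_least: "\<And>q. q \<noteq> 0 \<Longrightarrow> poly_mat q A = 0\<^sub>m n n \<Longrightarrow> degree \<mu> \<le> degree q"
    using min A unfolding is_minimal_poly_def by auto
  define q where "q = p ^ (e - 1) * t"
  have "p ^ e = p * p ^ (e - 1)" using \<open>e > 0\<close> by (simp add: power_eq_if)
  then have \<mu>_q: "\<mu> = p * q" unfolding q_def \<mu> by (simp add: mult.assoc)
  then have "q \<noteq> 0" using \<open>\<mu> \<noteq> 0\<close> by auto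
  then have "degree q < degree \<mu>" using \<mu>_q \<open>p \<noteq> 0\<close> \<open>degree p > 0\<close> by (simp add: degree_mult_eq)
  then have "poly_mat q A \<noteq> 0\<^sub>m n n" using \<mu>_least[OF \<open>q \<noteq> 0\<close>] by fastforce
  then obtain z where z: "z \<in> carrier_vec n" and qz: "poly_mat q A *\<^sub>v z \<noteq> 0\<^sub>v n"
    by (rule mat_mult_vec_nonzero[OF poly_mat_carrier[OF A]])
  define u where "u = poly_mat t A *\<^sub>v z"
  have u: "u \<in> carrier_vec n" using A z by (simp add: u_def)
  have pe_u: "poly_mat (p ^ e) A *\<^sub>v u = 0\<^sub>v n"
    unfolding u_def using A z \<mu>_0 by (simp add: poly_mat_mult_vec[symmetric] \<mu>[symmetric])
  have "p ^ e dvd h" if h: "poly_mat h A *\<^sub>v u = 0\<^sub>v n" for h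
  proof (rule ccontr)
    assume "\<not> p ^ e dvd h"
    then have "poly_mat (p ^ (e - 1)) A *\<^sub>v u = 0\<^sub>v n"
      by (rule annihilated_by_lower_prime_power[OF A u p pe_u h])
    then have "poly_mat q A *\<^sub>v z = 0\<^sub>v n" using A z by (simp add: q_def u_def poly_mat_mult_vec)
    with qz show False ..
  qed
  moreover have "poly_mat h A *\<^sub>v u = 0\<^sub>v n" if "p ^ e dvd h" for h
    using poly_mat_mult_vec_dvd_zero[OF A u pe_u that] .
  ultimately show ?thesis using u A unfolding generates_annihilator_def by auto
qed

lemma generates_annihilator_dvd_minimal_poly:
  fixes A :: "'a :: field mat"
  assumes A: "A \<in> carrier_mat n n" and min: "is_minimal_poly A \<mu>"
  shows "r dvd \<mu> \<Longrightarrow> \<exists>u\<in>carrier_vec n. generates_annihilator A u r"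
proof (induction "degree r" arbitrary: r rule: less_induct)
  case less
  have "\<mu> \<noteq> 0" using min unfolding is_minimal_poly_def by auto
  then have "r \<noteq> 0" using less.prems by auto
  show ?case
  proof (cases "is_unit r")
    case True
    then show ?thesis using generates_annihilator_zero_vec[OF True, of A] A by auto
  next
    case False
    obtain p where p: "irreducible p" "p dvd r"
      using irreducible_factor_exists[OF \<open>r \<noteq> 0\<close> False] by blast
    obtain e r' where r: "r = p ^ e * r'" and "\<not> p dvd r'"
      using irreducible_power_decompose[OF p(1) \<open>r \<noteq> 0\<close>] by blast
    have "e > 0" using r p(2) \<open>\<not> p dvd r'\<close> by (cases e) auto
    have "p ^ e dvd \<mu>" "r' dvd \<mu>" using less.prems r by (auto intro: dvd_mult_left dvd_mult_right)
    obtain u1 where u1: "u1 \<in> carrier_vec n" "generates_annihilator A u1 (p ^ e)"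
      using generates_annihilator_prime_power[OF A min p(1) \<open>e > 0\<close> \<open>p ^ e dvd \<mu>\<close>] by blast
    have "r' \<noteq> 0" "p \<noteq> 0" "degree p > 0"
      using r \<open>r \<noteq> 0\<close> p(1) by (auto simp: is_unit_iff_degree)
    then have "degree r' < degree r" using r \<open>e > 0\<close> by (simp add: degree_mult_eq degree_power_eq)
    then obtain u2 where u2: "u2 \<in> carrier_vec n" "generates_annihilator A u2 r'"
      using less.hyps \<open>r' dvd \<mu>\<close> by blast
    have "coprime (p ^ e) r'"
      by (rule field_poly_coprime_power_left[OF irreducible_imp_coprime[OF p(1) \<open>\<not> p dvd r'\<close>]])
    then have "generates_annihilator A (u1 + u2) r"
      unfolding r by (rule generates_annihilator_mult[OF A u1(1) u2(1) _ u1(2) u2(2)])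
    then show ?thesis using u1 u2 by auto
  qed
qed

definition cyclic_vector :: "'a :: field mat \<Rightarrow> 'a vec \<Rightarrow> bool" where
  "cyclic_vector A v \<longleftrightarrow> v \<in> carrier_vec (dim_row A) \<and>
     (\<forall>h. poly_mat h A *\<^sub>v v = 0\<^sub>v (dim_row A) \<longrightarrow> h = 0 \<or> dim_row A \<le> degree h)"

lemma non_derogative_cyclic_vector:
  fixes B :: "'a :: field mat"
  assumes B: "B \<in> carrier_mat n n" and "non_derogative B"
  obtains v where "cyclic_vector B v"
proof -
  have min: "is_minimal_poly B (char_poly B)"
    using \<open>non_derogative B\<close> unfolding non_derogative_def .
  obtain v where v: "v \<in> carrier_vec n" "generates_annihilator B v (char_poly B)"
    using generates_annihilator_dvd_minimal_poly[OF B min dvd_refl] by auto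
  have "h = 0 \<or> n \<le> degree h" if "poly_mat h B *\<^sub>v v = 0\<^sub>v n" for h
    using v(2) that B dvd_imp_degree_le[of "char_poly B" h] degree_monic_char_poly[OF B]
    unfolding generates_annihilator_def by auto
  then show ?thesis using that v B unfolding cyclic_vector_def by auto
qed

section \<open>Bases from a cyclic vector, similarity and eigenvalues\<close>

lemma poly_mat_sum_mult_vec_index:
  assumes A: "A \<in> carrier_mat n n" and v: "v \<in> carrier_vec n" and r: "r < n" and "finite I"
  shows "(poly_mat (\<Sum>i\<in>I. g i) A *\<^sub>v v) $ r = (\<Sum>i\<in>I. (poly_mat (g i) A *\<^sub>v v) $ r)"
  using \<open>finite I\<close>
proof (induction I rule: finite_induct)
  case empty
  then show ?case using A v r by (simp add: poly_mat_0)
next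
  case (insert x F)
  then show ?case using A v r by (simp add: poly_mat_add_vec)
qed

lemma poly_mat_smult_mult_vec_index:
  assumes A: "A \<in> carrier_mat n n" and v: "v \<in> carrier_vec n" and r: "r < n"
  shows "(poly_mat (Polynomial.smult c f) A *\<^sub>v v) $ r = c * (poly_mat f A *\<^sub>v v) $ r"
  using A v r by (simp add: poly_mat_smult scalar_prod_def sum_distrib_left algebra_simps)

lemma sum_smult_degree_triangular_eq_0:
  fixes f :: "nat \<Rightarrow> 'a :: field poly"
  assumes f: "\<And>i. i < n \<Longrightarrow> degree (f i) = i \<and> f i \<noteq> 0"
    and "(\<Sum>i<n. Polynomial.smult (c i) (f i)) = 0"
  shows "\<forall>i<n. c i = 0"
  using assms
proof (induction n)
  case (Suc n)
  have "coeff (f i) n = 0" if "i < n" for i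
    using Suc.prems(1)[of i] that by (simp add: coeff_eq_0)
  then have "coeff (\<Sum>i<Suc n. Polynomial.smult (c i) (f i)) n = c n * lead_coeff (f n)"
    using Suc.prems(1)[of n] by (simp add: coeff_sum)
  moreover have "lead_coeff (f n) \<noteq> 0" using Suc.prems(1)[of n] by (metis lessI leading_coeff_0_iff)
  ultimately have "c n = 0" using Suc.prems(2) by (simp del: sum.lessThan_Suc)
  then show ?case using Suc by (simp add: less_Suc_eq)
qed simp

lemma mat_inverse_if_injective:
  fixes K :: "'a :: field mat"
  assumes K: "K \<in> carrier_mat n n"
    and inj: "\<And>c. c \<in> carrier_vec n \<Longrightarrow> K *\<^sub>v c = 0\<^sub>v n \<Longrightarrow> c = 0\<^sub>v n"
  obtains K' where "K' \<in> carrier_mat n n" "K * K' = 1\<^sub>m n" "K' * K = 1\<^sub>m n"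
proof -
  have "det K \<noteq> 0" using det_0_iff_vec_prod_zero[OF K] inj by auto
  then have "K \<in> Units (ring_mat TYPE('a) n undefined)" by (rule det_non_zero_imp_unit[OF K])
  then show ?thesis using that unfolding Units_def by (auto simp: ring_mat_simps)
qed

lemma cyclic_vector_basis_invertible:
  fixes A :: "'a :: field mat"
  assumes A: "A \<in> carrier_mat n n" and v: "cyclic_vector A v"
    and f: "\<And>i. i < n \<Longrightarrow> degree (f i) = i \<and> f i \<noteq> 0"
  defines "K \<equiv> mat n n (\<lambda>(r, i). (poly_mat (f i) A *\<^sub>v v) $ r)"
  obtains K' where "K' \<in> carrier_mat n n" "K * K' = 1\<^sub>m n" "K' * K = 1\<^sub>m n"
proof (rule mat_inverse_if_injective)
  show K: "K \<in> carrier_mat n n" unfolding K_def by simp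
  have v_carrier: "v \<in> carrier_vec n" using v A unfolding cyclic_vector_def by simp
  fix c :: "'a vec" assume c: "c \<in> carrier_vec n" and Kc: "K *\<^sub>v c = 0\<^sub>v n"
  let ?g = "\<Sum>i<n. Polynomial.smult (c $ i) (f i)"
  have "poly_mat ?g A *\<^sub>v v = K *\<^sub>v c"
  proof (rule eq_vecI)
    fix r assume "r < dim_vec (K *\<^sub>v c)"
    then have r: "r < n" using K by simp
    have "(poly_mat ?g A *\<^sub>v v) $ r
        = (\<Sum>i<n. (poly_mat (Polynomial.smult (c $ i) (f i)) A *\<^sub>v v) $ r)"
      by (rule poly_mat_sum_mult_vec_index[OF A v_carrier r]) simp
    also have "\<dots> = (\<Sum>i<n. K $$ (r, i) * c $ i)"
      using r by (simp add: poly_mat_smult_mult_vec_index[OF A v_carrier r] K_def mult.commute)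
    also have "\<dots> = (K *\<^sub>v c) $ r"
      using K c r by (simp add: scalar_prod_def atLeast0LessThan)
    finally show "(poly_mat ?g A *\<^sub>v v) $ r = (K *\<^sub>v c) $ r" .
  qed (use A K in simp)
  then have "?g = 0 \<or> n \<le> degree ?g" using v A Kc unfolding cyclic_vector_def by simp
  moreover have "degree ?g \<le> n - 1"
    by (rule degree_sum_le) (use f in \<open>auto intro: order.trans[OF degree_smult_le]\<close>)
  ultimately have "?g = 0" using f[of 0] by (cases n) auto
  then have "\<forall>i<n. c $ i = 0" using f by (intro sum_smult_degree_triangular_eq_0)
  then show "c = 0\<^sub>v n" using c by (intro eq_vecI) auto
qed (use that in auto)

lemma similar_mat_if_intertwined:
  assumes "A \<in> carrier_mat n n" "M \<in> carrier_mat n n" "K \<in> carrier_mat n n" "K' \<in> carrier_mat n n"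
    and "K * K' = 1\<^sub>m n" "K' * K = 1\<^sub>m n" and AK: "A * K = K * M"
  shows "similar_mat A M"
proof (rule similar_matI[of A M K K' n])
  have "A = A * (K * K')" using assms by simp
  also have "\<dots> = K * M * K'" using assms by (simp flip: AK add: assoc_mult_mat[of _ n n _ n _ n])
  finally show "A = K * M * K'" .
qed (use assms in auto)

lemma mat_trace_mult_commute:
  fixes A B :: "'a :: comm_ring_1 mat"
  assumes "A \<in> carrier_mat n n" "B \<in> carrier_mat n n"
  shows "mat_trace (A * B) = mat_trace (B * A)"
proof -
  have "mat_trace (A * B) = (\<Sum>i<n. \<Sum>k<n. A $$ (i, k) * B $$ (k, i))"
    using assms by (simp add: mat_trace_def scalar_prod_def atLeast0LessThan)
  also have "\<dots> = (\<Sum>k<n. \<Sum>i<n. B $$ (k, i) * A $$ (i, k))"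
    by (subst sum.swap) (simp add: mult.commute)
  also have "\<dots> = mat_trace (B * A)"
    using assms by (simp add: mat_trace_def scalar_prod_def atLeast0LessThan)
  finally show ?thesis .
qed

lemma mat_trace_similar:
  fixes A B :: "'a :: comm_ring_1 mat"
  assumes "similar_mat A B"
  shows "mat_trace A = mat_trace B"
proof -
  obtain n P Q where PQ: "{A, B, P, Q} \<subseteq> carrier_mat n n" "P * Q = 1\<^sub>m n" "Q * P = 1\<^sub>m n"
    and A: "A = P * B * Q"
    using similar_matD[OF assms] by blast
  have "mat_trace A = mat_trace (P * (B * Q))" using A PQ by (simp add: assoc_mult_mat[of _ n n _ n _ n])
  also have "\<dots> = mat_trace ((B * Q) * P)" using PQ by (intro mat_trace_mult_commute[of _ n]) auto
  also have "(B * Q) * P = B"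
    using PQ by (simp add: assoc_mult_mat[of _ n n _ n _ n] right_mult_one_mat[of _ n n])
  finally show ?thesis .
qed

lemma eigenvalue_similar:
  fixes A B :: "'a :: field mat"
  assumes "similar_mat A B"
  shows "eigenvalue A e \<longleftrightarrow> eigenvalue B e"
proof -
  obtain n P Q where "{A, B, P, Q} \<subseteq> carrier_mat n n"
    using similar_matD[OF assms] by blast
  then show ?thesis
    using char_poly_similar[OF assms] eigenvalue_root_char_poly[of A n] eigenvalue_root_char_poly[of B n]
    by auto
qed

lemma eigenvalue_diagonal_mat:
  fixes L :: "'a :: field mat"
  assumes L: "L \<in> carrier_mat n n" "diagonal_mat L" and "eigenvalue L e"
  shows "\<exists>i<n. e = L $$ (i, i)"
proof -
  obtain x where x: "x \<in> carrier_vec n" "x \<noteq> 0\<^sub>v n" "L *\<^sub>v x = e \<cdot>\<^sub>v x"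
    using assms L unfolding eigenvalue_def eigenvector_def by auto
  obtain i where i: "i < n" "x $ i \<noteq> 0" using x(1,2) by (metis eq_vecI carrier_vecD index_zero_vec)
  have "(L *\<^sub>v x) $ i = (\<Sum>k\<in>{0..<n}. L $$ (i, k) * x $ k)"
    using L x(1) i by (simp add: scalar_prod_def)
  also have "\<dots> = (\<Sum>k\<in>{0..<n}. if k = i then L $$ (i, i) * x $ i else 0)"
    using L i unfolding diagonal_mat_def by (intro sum.cong) auto
  finally have "L $$ (i, i) * x $ i = e * x $ i" using x(1,3) i by simp
  then show ?thesis using i by auto
qed

definition square_zero_diagonalizable_sum :: "'a :: field mat \<Rightarrow> 'a set \<Rightarrow> bool" where
  "square_zero_diagonalizable_sum B S \<longleftrightarrow> (\<exists>N D.
     N \<in> carrier_mat (dim_row B) (dim_row B) \<and> D \<in> carrier_mat (dim_row B) (dim_row B) \<and>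
     B = N + D \<and> N * N = 0\<^sub>m (dim_row B) (dim_row B) \<and> diagonalizable D \<and>
     (\<forall>e. eigenvalue D e \<longrightarrow> e \<in> S))"

lemma square_zero_diagonalizable_sumI:
  fixes N D L :: "'a :: field mat"
  assumes "N \<in> carrier_mat n n" "D \<in> carrier_mat n n" "L \<in> carrier_mat n n"
    and "N * N = 0\<^sub>m n n" and "similar_mat D L" "diagonal_mat L" and "\<forall>i<n. L $$ (i, i) \<in> S"
  shows "square_zero_diagonalizable_sum (N + D) S"
proof -
  have "eigenvalue D e \<Longrightarrow> e \<in> S" for e
    using assms eigenvalue_similar[OF \<open>similar_mat D L\<close>] eigenvalue_diagonal_mat[of L n] by auto
  then show ?thesis
    unfolding square_zero_diagonalizable_sum_def diagonalizable_def
    using assms by (intro exI[of _ N] exI[of _ D]) auto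
qed

lemma square_zero_diagonalizable_sum_similar:
  fixes B M :: "'a :: field mat"
  assumes sim: "similar_mat B M" and "square_zero_diagonalizable_sum M S"
  shows "square_zero_diagonalizable_sum B S"
proof -
  obtain n P Q where PQ: "{B, M, P, Q} \<subseteq> carrier_mat n n" "P * Q = 1\<^sub>m n" "Q * P = 1\<^sub>m n"
    and B: "B = P * M * Q"
    using similar_matD[OF sim] by blast
  then obtain N D where ND: "N \<in> carrier_mat n n" "D \<in> carrier_mat n n" "M = N + D"
    "N * N = 0\<^sub>m n n" "diagonalizable D" "\<forall>e. eigenvalue D e \<longrightarrow> e \<in> S"
    using assms(2) unfolding square_zero_diagonalizable_sum_def by auto
  then obtain L where L: "diagonal_mat L" "similar_mat D L" unfolding diagonalizable_def by blast
  have simD: "similar_mat (P * D * Q) D" using PQ ND by (intro similar_matI[of _ _ P Q n]) auto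
  have "B = (P * N + P * D) * Q"
    using B ND PQ by (simp add: mult_add_distrib_mat[of _ n n])
  also have "\<dots> = P * N * Q + P * D * Q"
    using ND PQ by (intro add_mult_distrib_mat[of _ n n]) auto
  finally have "B = P * N * Q + P * D * Q" .
  moreover have "(P * N * Q) * (P * N * Q) = 0\<^sub>m n n"
  proof -
    note mult_carrier_mat[of _ n n _ n, simp]
    have QP: "Q * (P * X) = X" if "X \<in> carrier_mat n n" for X
      using PQ that by (simp flip: assoc_mult_mat[of Q n n P n X n])
    have "(P * N * Q) * (P * N * Q) = P * ((N * N) * Q)"
      using PQ ND(1) by (simp add: assoc_mult_mat[of _ n n _ n _ n] QP)
    then show ?thesis
      using PQ ND by (simp add: left_mult_zero_mat[of _ n n] right_mult_zero_mat[of _ n n])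
  qed
  moreover have "diagonalizable (P * D * Q)"
    using L simD similar_mat_trans unfolding diagonalizable_def by blast
  moreover have "eigenvalue (P * D * Q) e \<longleftrightarrow> eigenvalue D e" for e
    by (rule eigenvalue_similar[OF simD])
  moreover have "dim_row B = n" "P * N * Q \<in> carrier_mat n n" "P * D * Q \<in> carrier_mat n n"
    using PQ ND by auto
  ultimately show ?thesis
    using ND(6) unfolding square_zero_diagonalizable_sum_def
    by (intro exI[of _ "P * N * Q"] exI[of _ "P * D * Q"]) simp
qed

section \<open>The decomposition for a matrix with a cyclic vector\<close>

lemma sum_two_deltas:
  fixes g :: "nat \<Rightarrow> 'a :: comm_ring_1"
  assumes "a < n" "b < n" "a \<noteq> b"
  shows "(\<Sum>k<n. g k * ((if k = a then x else 0) + (if k = b then y else 0))) = g a * x + g b * y"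
proof -
  have "(\<Sum>k<n. g k * ((if k = a then x else 0) + (if k = b then y else 0)))
      = (\<Sum>k<n. if k = a then g a * x else 0) + (\<Sum>k<n. if k = b then g b * y else 0)"
    by (subst sum.distrib[symmetric]) (rule sum.cong, use assms in auto)
  also have "\<dots> = g a * x + g b * y" using assms by simp
  finally show ?thesis .
qed

lemma sum_even_odd:
  fixes f :: "nat \<Rightarrow> 'a :: comm_monoid_add"
  shows "(\<Sum>r<2 * m. f r) = (\<Sum>j<m. f (2 * j) + f (2 * j + 1))"
  by (induction m) (simp_all add: add.assoc)

lemma sum_support:
  fixes f :: "nat \<Rightarrow> 'a :: comm_monoid_add"
  assumes "S \<subseteq> {..<n}" and "\<And>k. k < n \<Longrightarrow> k \<notin> S \<Longrightarrow> f k = 0"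
  shows "(\<Sum>k<n. f k) = (\<Sum>k\<in>S. f k)"
  by (rule sum.mono_neutral_left[symmetric]) (use assms in auto)

locale cyclic_split =
  fixes B :: "'a :: field mat" and n m :: nat and v :: "'a vec"
    and \<rho> s :: 'a and lam :: "nat \<Rightarrow> 'a"
  assumes B: "B \<in> carrier_mat n n" and n: "n = 2 * m" and m: "m \<ge> 1"
    and v: "cyclic_vector B v"
    and lam_\<rho>: "\<forall>j<m - 1. lam j \<noteq> \<rho>" and s_\<rho>: "s \<noteq> \<rho>" and s_lam: "\<forall>j<m - 1. s \<noteq> lam j"
    and trace: "mat_trace B = of_nat m * \<rho> + (\<Sum>j<m - 1. lam j) + s"
begin

definition diag_entry :: "nat \<Rightarrow> 'a" where
  "diag_entry i = (if even i then \<rho> else lam (i div 2))"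

fun basis_poly :: "nat \<Rightarrow> 'a poly" where
  "basis_poly 0 = 1"
| "basis_poly (Suc i) = [:- diag_entry i, 1:] * basis_poly i"

definition basis_vec :: "nat \<Rightarrow> 'a vec" where
  "basis_vec i = poly_mat (basis_poly i) B *\<^sub>v v"

definition basis_mat :: "'a mat" where
  "basis_mat = mat n n (\<lambda>(r, i). basis_vec i $ r)"

lemma n_pos: "n > 0" and last_odd: "odd (n - 1)" using n m by auto

lemma v_carrier: "v \<in> carrier_vec n"
  using v B unfolding cyclic_vector_def by simp

lemma basis_vec_carrier [simp]: "basis_vec i \<in> carrier_vec n"
  unfolding basis_vec_def using B v_carrier by simp

lemma basis_vec_dim [simp]: "dim_vec (basis_vec i) = n"
  using basis_vec_carrier[of i] unfolding carrier_vec_def by simp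

lemma basis_mat_carrier [simp]: "basis_mat \<in> carrier_mat n n"
  and basis_mat_dim [simp]: "dim_row basis_mat = n" "dim_col basis_mat = n"
  unfolding basis_mat_def by simp_all

lemma basis_poly_monic: "monic (basis_poly i) \<and> degree (basis_poly i) = i"
proof (induction i)
  case (Suc i)
  let ?q = "[:- diag_entry i, 1:]"
  have "?q \<noteq> 0" "degree ?q = 1" "lead_coeff ?q = 1" by simp_all
  moreover have "basis_poly i \<noteq> 0" using Suc.IH by auto
  ultimately have "degree (?q * basis_poly i) = Suc i"
    using Suc.IH by (simp add: degree_mult_eq del: mult_pCons_left)
  moreover have "lead_coeff (?q * basis_poly i) = 1"
    by (simp only: lead_coeff_mult \<open>lead_coeff ?q = 1\<close> conjunct1[OF Suc.IH] mult_1)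
  ultimately show ?case by (simp only: basis_poly.simps)
qed simp

lemma basis_mat_invertible:
  obtains K' where "K' \<in> carrier_mat n n" "basis_mat * K' = 1\<^sub>m n" "K' * basis_mat = 1\<^sub>m n"
proof (rule cyclic_vector_basis_invertible[OF B v, of basis_poly])
  show "degree (basis_poly i) = i \<and> basis_poly i \<noteq> 0" for i
    using basis_poly_monic[of i] by auto
qed (use that in \<open>auto simp: basis_mat_def basis_vec_def\<close>)

lemma B_basis_vec:
  assumes "r < n"
  shows "(B *\<^sub>v basis_vec i) $ r = basis_vec (Suc i) $ r + diag_entry i * basis_vec i $ r"
proof -
  let ?p = "basis_poly i" and ?p' = "basis_poly (Suc i)"
  have "[:0, 1:] * ?p = ?p' + Polynomial.smult (diag_entry i) ?p"
    by (simp add: algebra_simps)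
  then have "B *\<^sub>v basis_vec i = poly_mat (?p' + Polynomial.smult (diag_entry i) ?p) B *\<^sub>v v"
    using B v_carrier by (metis basis_vec_def poly_mat_mult_vec poly_mat_x)
  also have "\<dots> = basis_vec (Suc i) + poly_mat (Polynomial.smult (diag_entry i) ?p) B *\<^sub>v v"
    unfolding basis_vec_def by (rule poly_mat_add_vec[OF B v_carrier])
  finally show ?thesis
    using B v_carrier assms
    by (simp add: poly_mat_smult_mult_vec_index basis_vec_def del: basis_poly.simps index_mult_mat_vec)
qed

definition last_coords :: "'a vec" where
  "last_coords = (SOME c. c \<in> carrier_vec n \<and> basis_mat *\<^sub>v c = B *\<^sub>v basis_vec (n - 1))"

lemma last_coords: "last_coords \<in> carrier_vec n" "basis_mat *\<^sub>v last_coords = B *\<^sub>v basis_vec (n - 1)"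
proof -
  obtain K' where K': "K' \<in> carrier_mat n n" "basis_mat * K' = 1\<^sub>m n"
    using basis_mat_invertible by blast
  let ?c = "K' *\<^sub>v (B *\<^sub>v basis_vec (n - 1))"
  have "basis_mat *\<^sub>v ?c = (basis_mat * K') *\<^sub>v (B *\<^sub>v basis_vec (n - 1))"
    using K' B by (intro assoc_mult_mat_vec[symmetric, of _ n n _ n]) auto
  also have "\<dots> = B *\<^sub>v basis_vec (n - 1)" using K' B by (simp del: assoc_mult_mat_vec)
  finally have "basis_mat *\<^sub>v ?c = B *\<^sub>v basis_vec (n - 1)" .
  moreover have "?c \<in> carrier_vec n" using K' B by simp
  ultimately have "?c \<in> carrier_vec n \<and> basis_mat *\<^sub>v ?c = B *\<^sub>v basis_vec (n - 1)" by blast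
  then have "last_coords \<in> carrier_vec n \<and> basis_mat *\<^sub>v last_coords = B *\<^sub>v basis_vec (n - 1)"
    unfolding last_coords_def by (rule someI)
  then show "last_coords \<in> carrier_vec n" "basis_mat *\<^sub>v last_coords = B *\<^sub>v basis_vec (n - 1)"
    by blast+
qed

definition nil_part :: "'a mat" where
  "nil_part = mat n n (\<lambda>(r, i). if even i \<and> r = i + 1 then 1 else 0)"

definition diag_part :: "'a mat" where
  "diag_part = mat n n (\<lambda>(r, i). if i = n - 1 then last_coords $ r
     else if r = i then diag_entry i else if odd i \<and> r = i + 1 then 1 else 0)"

lemma nil_part_carrier [simp]: "nil_part \<in> carrier_mat n n"
  and diag_part_carrier [simp]: "diag_part \<in> carrier_mat n n"
  and diag_part_dim [simp]: "dim_row diag_part = n" "dim_col diag_part = n"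
  unfolding nil_part_def diag_part_def by auto

lemma nil_part_square: "nil_part * nil_part = 0\<^sub>m n n"
proof (rule eq_matI)
  fix r i assume "r < dim_row (0\<^sub>m n n :: 'a mat)" "i < dim_col (0\<^sub>m n n :: 'a mat)"
  then show "(nil_part * nil_part) $$ (r, i) = 0\<^sub>m n n $$ (r, i)"
    by (auto simp: nil_part_def scalar_prod_def intro!: sum.neutral)
qed (auto simp: nil_part_def)

lemma B_basis_mat: "B * basis_mat = basis_mat * (nil_part + diag_part)"
proof (rule eq_matI)
  fix r i assume "r < dim_row (basis_mat * (nil_part + diag_part))"
    "i < dim_col (basis_mat * (nil_part + diag_part))"
  then have r: "r < n" and i: "i < n" by auto
  have lhs: "(B * basis_mat) $$ (r, i) = (B *\<^sub>v basis_vec i) $ r"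
  proof -
    have "col basis_mat i = basis_vec i" using i by (intro eq_vecI) (auto simp: basis_mat_def)
    then show ?thesis using r i B by simp
  qed
  have rhs: "(basis_mat * (nil_part + diag_part)) $$ (r, i)
      = (\<Sum>k<n. basis_vec k $ r * (nil_part + diag_part) $$ (k, i))"
    using r i by (simp add: scalar_prod_def atLeast0LessThan basis_mat_def)
  show "(B * basis_mat) $$ (r, i) = (basis_mat * (nil_part + diag_part)) $$ (r, i)"
  proof (cases "i = n - 1")
    case True
    have "(\<Sum>k<n. basis_vec k $ r * (nil_part + diag_part) $$ (k, i))
        = (\<Sum>k<n. basis_vec k $ r * last_coords $ k)"
      using True last_odd by (intro sum.cong) (auto simp: nil_part_def diag_part_def)
    also have "\<dots> = (basis_mat *\<^sub>v last_coords) $ r"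
      using r last_coords(1) by (simp add: basis_mat_def scalar_prod_def atLeast0LessThan)
    finally show ?thesis using lhs rhs True last_coords(2) by simp
  next
    case False
    then have "i + 1 < n" using i by simp
    have "(\<Sum>k<n. basis_vec k $ r * (nil_part + diag_part) $$ (k, i))
        = (\<Sum>k<n. basis_vec k $ r * ((if k = i + 1 then 1 else 0) + (if k = i then diag_entry i else 0)))"
      using False i by (intro sum.cong) (auto simp: nil_part_def diag_part_def)
    also have "\<dots> = basis_vec (i + 1) $ r + basis_vec i $ r * diag_entry i"
      using i \<open>i + 1 < n\<close> by (simp add: sum_two_deltas)
    finally show ?thesis using lhs rhs B_basis_vec[OF r] by (simp add: mult.commute)
  qed
qed (use B in auto)

lemma similar_B: "similar_mat B (nil_part + diag_part)"
proof -
  obtain K' where "K' \<in> carrier_mat n n" "basis_mat * K' = 1\<^sub>m n" "K' * basis_mat = 1\<^sub>m n"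
    using basis_mat_invertible by blast
  then show ?thesis using B B_basis_mat by (intro similar_mat_if_intertwined[of _ n]) auto
qed

lemma last_coords_last: "last_coords $ (n - 1) = s"
proof -
  have "mat_trace (nil_part + diag_part) = (\<Sum>r<n. diag_part $$ (r, r))"
    by (simp add: mat_trace_def nil_part_def diag_part_def)
  also have "\<dots> = (\<Sum>j<m. diag_part $$ (2 * j, 2 * j) + diag_part $$ (2 * j + 1, 2 * j + 1))"
    by (rule sum_even_odd[of _ m, folded n])
  also have "\<dots> = (\<Sum>j<m. \<rho> + (if j = m - 1 then last_coords $ (n - 1) else lam j))"
  proof (rule sum.cong)
    fix j assume "j \<in> {..<m}"
    then have "2 * j < n" "2 * j + 1 < n" "2 * j \<noteq> n - 1" "2 * j + 1 = n - 1 \<longleftrightarrow> j = m - 1"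
      "2 * (m - 1) + 1 = n - 1"
      using n m by auto
    then show "diag_part $$ (2 * j, 2 * j) + diag_part $$ (2 * j + 1, 2 * j + 1)
        = \<rho> + (if j = m - 1 then last_coords $ (n - 1) else lam j)"
      by (simp add: diag_part_def diag_entry_def)
  qed simp
  also have "\<dots> = of_nat m * \<rho> + ((\<Sum>j<m - 1. lam j) + last_coords $ (n - 1))"
  proof -
    have "(\<Sum>j<m. if j = m - 1 then last_coords $ (n - 1) else lam j)
        = (\<Sum>j<Suc (m - 1). if j = m - 1 then last_coords $ (n - 1) else lam j)"
      using m by simp
    also have "\<dots> = (\<Sum>j<m - 1. lam j) + last_coords $ (n - 1)"
      by simp
    finally show ?thesis by (simp add: sum.distrib)
  qed
  finally show ?thesis using mat_trace_similar[OF similar_B] trace by simp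
qed

definition eigval :: "nat \<Rightarrow> 'a" where
  "eigval i = (if i = n - 1 then s else diag_entry i)"

definition eigval_mat :: "'a mat" where
  "eigval_mat = mat n n (\<lambda>(r, i). if r = i then eigval i else 0)"

text \<open>The eigenvector of \<open>diag_part\<close> for \<open>s\<close> with last entry 1, solved for by forward
  substitution; this needs \<open>s\<close> to differ from all other diagonal entries.\<close>

definition last_eigvec :: "nat \<Rightarrow> 'a" where
  "last_eigvec r = (if r = n - 1 then 1
     else if odd r then last_coords $ r / (s - lam (r div 2))
     else (last_coords $ r + (if r = 0 then 0 else last_coords $ (r - 1) / (s - lam ((r - 1) div 2))))
       / (s - \<rho>))"

definition eigvec_mat :: "'a mat" where
  "eigvec_mat = mat n n (\<lambda>(r, i). if i = n - 1 then last_eigvec r else if r = i then 1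
     else if odd i \<and> r = i + 1 then 1 / (lam (i div 2) - \<rho>) else 0)"

lemma eigval_mat_carrier [simp]: "eigval_mat \<in> carrier_mat n n"
  and eigvec_mat_carrier [simp]: "eigvec_mat \<in> carrier_mat n n"
  and eigval_mat_dim [simp]: "dim_row eigval_mat = n" "dim_col eigval_mat = n"
  and eigvec_mat_dim [simp]: "dim_row eigvec_mat = n" "dim_col eigvec_mat = n"
  unfolding eigval_mat_def eigvec_mat_def by auto

lemma before_last_even: "Suc k = n - 1 \<Longrightarrow> even k"
  using n by presburger

lemma lam_distinct:
  assumes "odd i" "i < n - 1"
  shows "lam (i div 2) \<noteq> \<rho> \<and> s \<noteq> lam (i div 2)"
proof -
  have "i div 2 < m - 1" using assms n by (auto elim!: oddE)
  then show ?thesis using lam_\<rho> s_lam by auto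
qed

lemma eigvec_mat_eigval_mat:
  assumes "r < n" "i < n"
  shows "(eigvec_mat * eigval_mat) $$ (r, i) = eigvec_mat $$ (r, i) * eigval i"
proof -
  have "(eigvec_mat * eigval_mat) $$ (r, i) = (\<Sum>k<n. eigvec_mat $$ (r, k) * eigval_mat $$ (k, i))"
    using assms by (simp add: scalar_prod_def atLeast0LessThan)
  also have "\<dots> = (\<Sum>k\<in>{i}. eigvec_mat $$ (r, k) * eigval_mat $$ (k, i))"
    by (rule sum_support) (use assms in \<open>auto simp: eigval_mat_def\<close>)
  finally show ?thesis using assms by (simp add: eigval_mat_def)
qed

lemma diag_part_row:
  assumes "r < n - 1"
  shows "(\<Sum>k<n. diag_part $$ (r, k) * x k)
    = diag_entry r * x r + (if r > 0 \<and> even r then x (r - 1) else 0) + last_coords $ r * x (n - 1)"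
proof (cases "r > 0 \<and> even r")
  case True
  then have "(\<Sum>k<n. diag_part $$ (r, k) * x k) = (\<Sum>k\<in>{r - 1, r, n - 1}. diag_part $$ (r, k) * x k)"
    using assms by (intro sum_support) (auto simp: diag_part_def)
  moreover have "r - 1 \<noteq> r" "r - 1 \<noteq> n - 1" "odd (r - 1)" using assms True by auto
  ultimately show ?thesis using assms True by (simp add: diag_part_def)
next
  case False
  then have "(\<Sum>k<n. diag_part $$ (r, k) * x k) = (\<Sum>k\<in>{r, n - 1}. diag_part $$ (r, k) * x k)"
    using assms by (intro sum_support) (auto simp: diag_part_def)
  then show ?thesis using assms by (simp add: diag_part_def if_not_P[OF False])
qed

lemma last_eigvec_eigen:
  assumes "r < n"
  shows "(\<Sum>k<n. diag_part $$ (r, k) * last_eigvec k) = s * last_eigvec r"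
proof (cases "r = n - 1")
  case True
  then have "(\<Sum>k<n. diag_part $$ (r, k) * last_eigvec k) = (\<Sum>k\<in>{n - 1}. diag_part $$ (r, k) * last_eigvec k)"
    using n_pos before_last_even by (intro sum_support) (auto simp: diag_part_def)
  then show ?thesis using True n_pos last_coords_last by (simp add: diag_part_def last_eigvec_def)
next
  case False
  then have r: "r < n - 1" using assms by simp
  define prev where "prev = (if r > 0 \<and> even r then last_eigvec (r - 1) else 0)"
  have "s - diag_entry r \<noteq> 0" using s_\<rho> lam_distinct[of r] r by (auto simp: diag_entry_def)
  moreover have "last_eigvec r = (last_coords $ r + prev) / (s - diag_entry r)"
    using r by (auto simp: last_eigvec_def diag_entry_def prev_def)
  ultimately have "last_eigvec r * (s - diag_entry r) = last_coords $ r + prev" by simp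
  moreover have "last_eigvec (n - 1) = 1" by (simp add: last_eigvec_def)
  ultimately show ?thesis
    unfolding diag_part_row[OF r] prev_def[symmetric] by (simp add: algebra_simps)
qed

lemma diag_part_eigvec_mat_col:
  assumes r: "r < n" and i: "i < n - 1"
  shows "(\<Sum>k<n. diag_part $$ (r, k) * eigvec_mat $$ (k, i)) = eigvec_mat $$ (r, i) * diag_entry i"
proof (cases "even i")
  case True
  have "(\<Sum>k<n. diag_part $$ (r, k) * eigvec_mat $$ (k, i))
      = (\<Sum>k\<in>{i}. diag_part $$ (r, k) * eigvec_mat $$ (k, i))"
    by (rule sum_support) (use i True in \<open>auto simp: eigvec_mat_def\<close>)
  also have "\<dots> = eigvec_mat $$ (r, i) * diag_entry i"
    using r i True by (simp add: diag_part_def eigvec_mat_def diag_entry_def)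
  finally show ?thesis .
next
  case False
  have i1: "i + 1 < n" "i + 1 \<noteq> n - 1" "even (i + 1)"
    using i False last_odd before_last_even[of i] by auto
  have "(\<Sum>k<n. diag_part $$ (r, k) * eigvec_mat $$ (k, i))
      = (\<Sum>k\<in>{i, i + 1}. diag_part $$ (r, k) * eigvec_mat $$ (k, i))"
    by (rule sum_support) (use i i1 False in \<open>auto simp: eigvec_mat_def\<close>)
  also have "\<dots> = diag_part $$ (r, i) + diag_part $$ (r, i + 1) * (1 / (lam (i div 2) - \<rho>))"
    using i i1 False by (simp add: eigvec_mat_def)
  also have "\<dots> = eigvec_mat $$ (r, i) * diag_entry i"
    using r i i1 False lam_distinct[OF False i]
    by (auto simp: diag_part_def eigvec_mat_def diag_entry_def field_simps)
  finally show ?thesis .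
qed

lemma diag_part_eigvec_mat: "diag_part * eigvec_mat = eigvec_mat * eigval_mat"
proof (rule eq_matI)
  fix r i assume "r < dim_row (eigvec_mat * eigval_mat)" "i < dim_col (eigvec_mat * eigval_mat)"
  then have r: "r < n" and i: "i < n" by auto
  have "(diag_part * eigvec_mat) $$ (r, i) = (\<Sum>k<n. diag_part $$ (r, k) * eigvec_mat $$ (k, i))"
    using r i by (simp add: scalar_prod_def atLeast0LessThan)
  also have "\<dots> = eigvec_mat $$ (r, i) * eigval i"
  proof (cases "i = n - 1")
    case True
    then show ?thesis
      using last_eigvec_eigen[OF r] n_pos r by (simp add: eigvec_mat_def eigval_def mult.commute)
  next
    case False
    then show ?thesis using diag_part_eigvec_mat_col[OF r] i by (simp add: eigval_def)
  qed
  finally show "(diag_part * eigvec_mat) $$ (r, i) = (eigvec_mat * eigval_mat) $$ (r, i)"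
    using eigvec_mat_eigval_mat[OF r i] by simp
qed auto

lemma eigvec_mat_injective:
  assumes x: "x \<in> carrier_vec n" and Px: "eigvec_mat *\<^sub>v x = 0\<^sub>v n"
  shows "x = 0\<^sub>v n"
proof -
  have n1: "n - 1 < n" using n_pos by simp
  have row: "(\<Sum>k<n. eigvec_mat $$ (r, k) * x $ k) = 0" if "r < n" for r
  proof -
    have "(eigvec_mat *\<^sub>v x) $ r = (\<Sum>k<n. eigvec_mat $$ (r, k) * x $ k)"
      using x that by (simp add: scalar_prod_def atLeast0LessThan)
    then show ?thesis using Px that by simp
  qed
  have x_last: "x $ (n - 1) = 0"
  proof -
    have "(\<Sum>k<n. eigvec_mat $$ (n - 1, k) * x $ k) = (\<Sum>k\<in>{n - 1}. eigvec_mat $$ (n - 1, k) * x $ k)"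
      by (rule sum_support) (use n1 before_last_even in \<open>auto simp: eigvec_mat_def\<close>)
    then show ?thesis using row[OF n1] n1 by (simp add: eigvec_mat_def last_eigvec_def)
  qed
  have "x $ r = 0" if "r < n - 1" for r
    using that
  proof (induction r rule: less_induct)
    case (less r)
    have "(\<Sum>k<n. eigvec_mat $$ (r, k) * x $ k) = (\<Sum>k\<in>{..r} \<union> {n - 1}. eigvec_mat $$ (r, k) * x $ k)"
      by (rule sum_support) (use less.prems in \<open>auto simp: eigvec_mat_def\<close>)
    also have "\<dots> = (\<Sum>k\<in>{..r}. eigvec_mat $$ (r, k) * x $ k)"
      using less.prems x_last by (subst sum.union_disjoint) auto
    also have "\<dots> = (\<Sum>k\<in>{r}. eigvec_mat $$ (r, k) * x $ k)"
      using less.IH less.prems by (intro sum.mono_neutral_right) auto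
    finally show ?case using row[of r] less.prems by (simp add: eigvec_mat_def)
  qed
  then have "x $ i = 0" if "i < n" for i
    using that x_last by (cases "i = n - 1") auto
  then show ?thesis using x by (intro eq_vecI) auto
qed

lemma similar_diag_part: "similar_mat diag_part eigval_mat"
proof -
  obtain P' where "P' \<in> carrier_mat n n" "eigvec_mat * P' = 1\<^sub>m n" "P' * eigvec_mat = 1\<^sub>m n"
    using mat_inverse_if_injective[OF eigvec_mat_carrier eigvec_mat_injective] by blast
  then show ?thesis
    using diag_part_eigvec_mat by (intro similar_mat_if_intertwined[of _ n]) auto
qed

theorem square_zero_diagonalizable_sum: "square_zero_diagonalizable_sum B ({\<rho>, s} \<union> lam ` {..<m - 1})"
proof (rule square_zero_diagonalizable_sum_similar[OF similar_B])
  have eigval: "eigval i \<in> {\<rho>, s} \<union> lam ` {..<m - 1}" if "i < n" for i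
  proof (cases "i = n - 1 \<or> even i")
    case False
    then have "i div 2 < m - 1" using that n by (auto elim!: oddE)
    then show ?thesis using False by (auto simp: eigval_def diag_entry_def)
  qed (auto simp: eigval_def diag_entry_def)
  show "square_zero_diagonalizable_sum (nil_part + diag_part) ({\<rho>, s} \<union> lam ` {..<m - 1})"
  proof (rule square_zero_diagonalizable_sumI[OF nil_part_carrier diag_part_carrier
        eigval_mat_carrier nil_part_square similar_diag_part])
    show "diagonal_mat eigval_mat" by (simp add: diagonal_mat_def eigval_mat_def)
    show "\<forall>i<n. eigval_mat $$ (i, i) \<in> {\<rho>, s} \<union> lam ` {..<m - 1}"
      using eigval by (simp add: eigval_mat_def)
  qed
qed

end

theorem non_derogative_square_zero_diagonalizable_sum:
  fixes B :: "'a :: field mat" and lam :: "nat \<Rightarrow> 'a"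
  assumes B: "B \<in> carrier_mat (2 * m) (2 * m)" and nd: "non_derogative B" and "m \<ge> 1"
    and "\<forall>j<m - 1. lam j \<noteq> \<rho>" "s \<noteq> \<rho>" "\<forall>j<m - 1. s \<noteq> lam j"
    and "mat_trace B = of_nat m * \<rho> + (\<Sum>j<m - 1. lam j) + s"
  shows "square_zero_diagonalizable_sum B ({\<rho>, s} \<union> lam ` {..<m - 1})"
proof -
  obtain v where "cyclic_vector B v" using non_derogative_cyclic_vector[OF B nd] .
  then interpret cyclic_split B "2 * m" m v \<rho> s lam using assms by unfold_locales auto
  show ?thesis by (rule square_zero_diagonalizable_sum)
qed

section \<open>Characteristic two\<close>

lemma square_zero_diagonalizable_sum_mono:
  "square_zero_diagonalizable_sum B S \<Longrightarrow> S \<subseteq> T \<Longrightarrow> square_zero_diagonalizable_sum B T"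
  unfolding square_zero_diagonalizable_sum_def by blast

lemma char_two_add_self:
  fixes x :: "'a :: ring_1"
  assumes "CHAR('a) = 2"
  shows "x + x = 0"
proof -
  have "(2 :: 'a) = 0" using of_nat_CHAR[where 'a = 'a] assms by simp
  then show ?thesis by (metis mult_2 mult_zero_left)
qed

lemma char_two_of_nat_double:
  assumes "CHAR('a :: ring_1) = 2"
  shows "(of_nat (2 * j) :: 'a) = 0"
  using char_two_add_self[OF assms, of "of_nat j"] by (simp add: mult_2)

lemma square_zero_diagonalizable_sum_trace_nonzero:
  fixes B :: "'a :: field mat"
  assumes char: "CHAR('a) = 2" and B: "B \<in> carrier_mat (4 * k + 2) (4 * k + 2)"
    and nd: "non_derogative B" and "a \<noteq> 0" "a \<noteq> 1" and "mat_trace B = c" "c \<noteq> 0"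
  shows "square_zero_diagonalizable_sum B {0, c, c * a, c * (a + 1)}"
proof -
  have B': "B \<in> carrier_mat (2 * (2 * k + 1)) (2 * (2 * k + 1))" using B by simp
  have "c * a \<noteq> 0" "c \<noteq> c * a" using assms by auto
  moreover have "mat_trace B = of_nat (2 * k + 1) * 0 + (\<Sum>j<2 * k. c * a) + c"
    using assms char_two_of_nat_double[OF char, of k] by simp
  ultimately have "square_zero_diagonalizable_sum B ({0, c} \<union> (\<lambda>_. c * a) ` {..<2 * k + 1 - 1})"
    using \<open>c \<noteq> 0\<close> by (intro non_derogative_square_zero_diagonalizable_sum[OF B' nd]) simp_all
  then show ?thesis by (rule square_zero_diagonalizable_sum_mono) auto
qed

lemma square_zero_diagonalizable_sum_trace_zero:
  fixes B :: "'a :: field mat"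
  assumes char: "CHAR('a) = 2" and B: "B \<in> carrier_mat (4 * k + 2) (4 * k + 2)"
    and nd: "non_derogative B" and "k \<ge> 1" and "a \<noteq> 0" "a \<noteq> 1" and "mat_trace B = 0"
  shows "square_zero_diagonalizable_sum B {b, b + 1, b + a, b + a + 1}"
proof -
  define lam where "lam j = b + a + (if j = 0 then 1 else 0)" for j :: nat
  have B': "B \<in> carrier_mat (2 * (2 * k + 1)) (2 * (2 * k + 1))" using B by simp
  have two: "x + x = 0" for x :: 'a by (rule char_two_add_self[OF char])
  have "a + 1 \<noteq> 0"
  proof
    assume "a + 1 = 0"
    moreover have "a = (a + 1) + 1" using two[of 1] by (simp add: add.assoc)
    ultimately show False using \<open>a \<noteq> 1\<close> by simp
  qed
  then have "\<forall>j<2 * k + 1 - 1. lam j \<noteq> b" "\<forall>j<2 * k + 1 - 1. b + 1 \<noteq> lam j"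
    using \<open>a \<noteq> 0\<close> \<open>a \<noteq> 1\<close> by (auto simp: lam_def add.assoc)
  moreover have "(\<Sum>j<2 * k. lam j) = of_nat (2 * k) * (b + a) + 1"
    using \<open>k \<ge> 1\<close> by (simp add: lam_def sum.distrib)
  then have "mat_trace B = of_nat (2 * k + 1) * b + (\<Sum>j<2 * k + 1 - 1. lam j) + (b + 1)"
    using \<open>mat_trace B = 0\<close> char_two_of_nat_double[OF char, of k] two[of b] two[of 1]
    by (simp add: algebra_simps)
  ultimately have "square_zero_diagonalizable_sum B ({b, b + 1} \<union> lam ` {..<2 * k + 1 - 1})"
    by (intro non_derogative_square_zero_diagonalizable_sum[OF B' nd]) simp_all
  then show ?thesis by (rule square_zero_diagonalizable_sum_mono) (auto simp: lam_def split: if_splits)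
qed

theorem proposition2p11:
  fixes B :: "'a :: field mat" and k :: nat and a :: 'a
  assumes char2: "CHAR('a) = 2"
    and card4: "infinite (UNIV :: 'a set) \<or> card (UNIV :: 'a set) \<ge> 4"
    and k1: "k \<ge> 1"
    and B: "B \<in> carrier_mat (4 * k + 2) (4 * k + 2)"
    and nd: "non_derogative B"
    and a0: "a \<noteq> 0" and a1: "a \<noteq> 1"
  shows
    "(\<forall>c. mat_trace B = c \<and> c \<noteq> 0 \<longrightarrow>
       (\<exists>N D. N \<in> carrier_mat (4 * k + 2) (4 * k + 2) \<and> D \<in> carrier_mat (4 * k + 2) (4 * k + 2) \<and>
          B = N + D \<and> N * N = 0\<^sub>m (4 * k + 2) (4 * k + 2) \<and> diagonalizable D \<and>
          (\<forall>e. eigenvalue D e \<longrightarrow> e \<in> {0, c, c * a, c * (a + 1)})))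
   \<and> (\<forall>b. mat_trace B = 0 \<and> b ^ 2 = coeff (char_poly B) (4 * k) + a ^ 2 + a + 1 \<longrightarrow>
       (\<exists>N D. N \<in> carrier_mat (4 * k + 2) (4 * k + 2) \<and> D \<in> carrier_mat (4 * k + 2) (4 * k + 2) \<and>
          B = N + D \<and> N * N = 0\<^sub>m (4 * k + 2) (4 * k + 2) \<and> diagonalizable D \<and>
          (\<forall>e. eigenvalue D e \<longrightarrow> e \<in> {b, b + 1, b + a, b + a + 1})))"
proof (intro conjI allI impI, goal_cases)
  case (1 c)
  then show ?case
    using square_zero_diagonalizable_sum_trace_nonzero[OF char2 B nd a0 a1, of c] carrier_matD(1)[OF B]
    unfolding square_zero_diagonalizable_sum_def by simp
next
  case (2 b)
  then show ?case
    using square_zero_diagonalizable_sum_trace_zero[OF char2 B nd k1 a0 a1, of b] carrier_matD(1)[OF B]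
    unfolding square_zero_diagonalizable_sum_def by simp
qed

end
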